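(* Let $0<\beta<\delta$, $N_0$ a non-negative integer, and set $\hat s=s/(\delta-\beta)$. Let $g(z,t)=\left[\frac{\delta-\beta z-(1-z)\delta e^{(\beta-\delta)t}}{\delta-\beta z-(1-z)\beta e^{(\beta-\delta)t}}\right]^{N_0}$. Then for $0\le z<1$ and $\operatorname{Re}s>0$, $$\int_0^\infty g(z,t)e^{-st}\,dt=\left(\frac{\delta-\beta z}{1-z}\right)^{\hat s}\int_z^1 (1-u)^{\hat s-1}(\delta-\beta u)^{-\hat s-1}u^{N_0}\,du,$$ and this function $G(z,s)$ satisfies the ODE $(1-z)(\delta-\beta z)\,\partial_z G(z,s)=sG(z,s)-z^{N_0}$.
   Context: Powers of positive real numbers are taken with the principal branch. *)

theory Defs
  imports "HOL-Analysis.Analysis"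
begin

definition gfun :: "real \<Rightarrow> real \<Rightarrow> nat \<Rightarrow> real \<Rightarrow> real \<Rightarrow> real" where
  "gfun \<beta> \<delta> N0 z t =
     ((\<delta> - \<beta> * z - (1 - z) * \<delta> * exp ((\<beta> - \<delta>) * t)) /
      (\<delta> - \<beta> * z - (1 - z) * \<beta> * exp ((\<beta> - \<delta>) * t))) ^ N0"

definition Gfun :: "real \<Rightarrow> real \<Rightarrow> nat \<Rightarrow> real \<Rightarrow> complex \<Rightarrow> complex" where
  "Gfun \<beta> \<delta> N0 z s =
     integral {0..} (\<lambda>t. complex_of_real (gfun \<beta> \<delta> N0 z t) * exp (- s * complex_of_real t))"

end

theory Submission
  imports Defs
begin

text \<open>Write \<open>g = u ^ N0\<close>, where \<open>u = u(t)\<close> is the base of the power in \<open>g\<close>. It solves the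
Riccati equation \<open>u' = (1 - u) (\<delta> - \<beta> u)\<close> with \<open>u(0) = z\<close>, increases to \<open>1\<close>, and conserves
\<open>(\<delta> - \<beta> z) / (1 - z) \<cdot> (1 - u) / (\<delta> - \<beta> u) \<cdot> e ^ ((\<delta> - \<beta>) t) = 1\<close>. Raising this to the power
\<open>s / (\<delta> - \<beta>)\<close> expresses \<open>e ^ (-s t)\<close> through \<open>u\<close>, so the substitution \<open>u = u(t)\<close> turns the
Laplace integral over \<open>[0, T]\<close> into the integral of the kernel over \<open>[z, u(T)]\<close>, and dominated
convergence on both sides lets \<open>T \<rightarrow> \<infinity>\<close>. The differential equation is the product rule for
the prefactor, whose logarithmic derivative is \<open>(\<delta> - \<beta>) / ((1 - z) (\<delta> - \<beta> z))\<close>, times the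
tail integral \<open>\<integral>\<^sub>z\<^sup>1\<close> of the kernel.\<close>

lemma dominated_exhaustion:
  fixes f :: "'n::euclidean_space \<Rightarrow> 'm::euclidean_space" and g :: "'n \<Rightarrow> real"
  assumes sub: "\<And>n. K n \<subseteq> S" and int: "\<And>n. f integrable_on K n"
    and g: "g integrable_on S" and dom: "\<And>x. x \<in> S \<Longrightarrow> norm (f x) \<le> g x"
    and exh: "\<And>x. x \<in> S \<Longrightarrow> f x \<noteq> 0 \<Longrightarrow> eventually (\<lambda>n. x \<in> K n) sequentially"
  shows "f integrable_on S" "(\<lambda>n. integral (K n) f) \<longlonglongrightarrow> integral S f"
proof -
  define fn where "fn n x = (if x \<in> K n then f x else 0)" for n x
  have fn_int: "(fn n has_integral integral (K n) f) S" for n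
    unfolding fn_def using sub int by (simp add: has_integral_restrict integrable_integral)
  have fn_dom: "norm (fn n x) \<le> g x" if "x \<in> S" for n x
    using dom[OF that] norm_ge_zero[of "f x"] unfolding fn_def by (auto simp del: norm_ge_zero)
  have fn_conv: "(\<lambda>n. fn n x) \<longlonglongrightarrow> f x" if "x \<in> S" for x
  proof (cases "f x = 0")
    case True
    then have "fn n x = 0" for n by (simp add: fn_def)
    then show ?thesis using True by simp
  next
    case False
    from exh[OF that False] have "eventually (\<lambda>n. fn n x = f x) sequentially"
      by eventually_elim (simp add: fn_def)
    then show ?thesis by (rule tendsto_eventually)
  qed
  have fn_eq: "integral S (fn n) = integral (K n) f" for n
    using fn_int[of n] by (rule integral_unique)
  have "\<And>n. fn n integrable_on S" using fn_int by blast
  from dominated_convergence[OF this g fn_dom fn_conv]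
  show "f integrable_on S" "(\<lambda>n. integral (K n) f) \<longlonglongrightarrow> integral S f"
    unfolding fn_eq by simp_all
qed

lemma integral_tail_has_vector_derivative:
  fixes f :: "real \<Rightarrow> 'a::banach"
  assumes f: "f integrable_on {a..b}" and x: "x \<in> {a..<b}"
    and cont: "continuous (at x within {a..<b}) f"
  shows "((\<lambda>u. integral {u..b} f) has_vector_derivative - f x) (at x within {a..<b})"
proof -
  have split: "integral {u..b} f = integral {a..b} f - integral {a..u} f" if "u \<in> {a..<b}" for u
    using Henstock_Kurzweil_Integration.integral_combine[of a u b f] that f by (auto simp: algebra_simps)
  have "{a..b} - {b} = {a..<b}" using x by auto
  then have "((\<lambda>u. integral {a..u} f) has_vector_derivative f x) (at x within {a..<b})"
    using integral_has_vector_derivative_continuous_at[OF f, where x=x and S="{b}"] x cont by auto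
  then have d: "((\<lambda>u. integral {a..b} f - integral {a..u} f) has_vector_derivative - f x)
      (at x within {a..<b})"
    using has_vector_derivative_diff[OF has_vector_derivative_const] by fastforce
  show ?thesis
    by (rule has_vector_derivative_transform[OF x split d])
qed

lemma integrable_on_one_minus_powr:
  fixes a z :: real
  assumes "a > -1" "z \<le> 1"
  shows "(\<lambda>v. (1 - v) powr a) integrable_on {z..1}"
proof -
  define \<Phi> where "\<Phi> v = - ((1 - v) powr (a + 1)) / (a + 1)" for v :: real
  have "((\<lambda>v. (1 - v) powr a) has_integral (\<Phi> 1 - \<Phi> z)) {z..1}"
  proof (rule fundamental_theorem_of_calculus_interior[OF \<open>z \<le> 1\<close>])
    show "continuous_on {z..1} \<Phi>"
      unfolding \<Phi>_def using assms by (intro continuous_intros continuous_on_powr') auto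
    fix x assume x: "x \<in> {z<..<1}"
    have "((\<lambda>v. (1 - v) powr (a + 1)) has_real_derivative
        (a + 1) * (1 - x) powr (a + 1 - of_nat 1) * - 1) (at x)"
      by (rule DERIV_fun_powr) (use x in \<open>auto intro!: derivative_eq_intros\<close>)
    then have "(\<Phi> has_real_derivative - ((a + 1) * (1 - x) powr (a + 1 - of_nat 1) * - 1) / (a + 1)) (at x)"
      unfolding \<Phi>_def by (intro DERIV_cdivide DERIV_minus)
    then have "(\<Phi> has_real_derivative (1 - x) powr a) (at x)"
      by (rule DERIV_cong) (use assms in simp)
    then show "(\<Phi> has_vector_derivative (1 - x) powr a) (at x)"
      by (simp add: has_real_derivative_iff_has_vector_derivative)
  qed
  then show ?thesis by blast
qed

lemma powr_of_real_pos_eq_exp: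
  "0 < x \<Longrightarrow> complex_of_real x powr c = exp (c * of_real (ln x))"
  by (simp add: powr_def Ln_of_real)

lemma of_real_pos_eq_exp: "0 < x \<Longrightarrow> complex_of_real x = exp (of_real (ln x))"
  by (simp add: exp_of_real)

locale birth_death =
  fixes \<beta> \<delta> :: real
  assumes birth_pos: "0 < \<beta>" and birth_less_death: "\<beta> < \<delta>"
begin

definition flow :: "real \<Rightarrow> real \<Rightarrow> real" where
  "flow z t = (\<delta> - \<beta> * z - (1 - z) * \<delta> * exp ((\<beta> - \<delta>) * t)) /
               (\<delta> - \<beta> * z - (1 - z) * \<beta> * exp ((\<beta> - \<delta>) * t))"

lemma gfun_eq_flow_power: "gfun \<beta> \<delta> N0 z t = flow z t ^ N0"
  by (simp add: gfun_def flow_def)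

lemma exp_decay_le_one: "0 \<le> t \<Longrightarrow> exp ((\<beta> - \<delta>) * t) \<le> 1"
  using birth_less_death by (simp add: mult_nonpos_nonneg)

lemma flow_identities:
  assumes "z \<le> 1" "0 \<le> t"
  defines "a \<equiv> exp ((\<beta> - \<delta>) * t)"
  defines "den \<equiv> \<delta> - \<beta> * z - (1 - z) * \<beta> * a"
  shows "\<delta> - \<beta> \<le> den"
    and "1 - flow z t = (1 - z) * (\<delta> - \<beta>) * a / den"
    and "\<delta> - \<beta> * flow z t = (\<delta> - \<beta>) * (\<delta> - \<beta> * z) / den"
    and "flow z t - z = (1 - z) * (\<delta> - \<beta> * z) * (1 - a) / den"
proof -
  have "a \<le> 1" unfolding a_def using \<open>0 \<le> t\<close> by (rule exp_decay_le_one)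
  then have "(1 - z) * \<beta> * a \<le> (1 - z) * \<beta>"
    using assms birth_pos by (simp add: mult_left_le)
  then show den: "\<delta> - \<beta> \<le> den" unfolding den_def by (simp add: algebra_simps)
  then have "den \<noteq> 0" using birth_less_death by linarith
  then have nz: "\<delta> - \<beta> * z - (1 - z) * \<beta> * a \<noteq> 0" unfolding den_def .
  have flow_eq: "flow z t = (\<delta> - \<beta> * z - (1 - z) * \<delta> * a) / den"
    unfolding flow_def a_def den_def ..
  show "1 - flow z t = (1 - z) * (\<delta> - \<beta>) * a / den"
    and "\<delta> - \<beta> * flow z t = (\<delta> - \<beta>) * (\<delta> - \<beta> * z) / den"
    and "flow z t - z = (1 - z) * (\<delta> - \<beta> * z) * (1 - a) / den"
    unfolding flow_eq den_def using nz by (simp_all add: field_simps)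
qed

lemma death_minus_birth_pos: "u \<le> 1 \<Longrightarrow> 0 < \<delta> - \<beta> * u"
  using birth_pos birth_less_death mult_left_mono[of u 1 \<beta>] by linarith

lemma flow_bounds:
  assumes "0 \<le> z" "z < 1" "0 \<le> t"
  shows "z \<le> flow z t" "flow z t < 1" "0 < \<delta> - \<beta> * flow z t"
proof -
  note id = flow_identities[OF less_imp_le[OF \<open>z < 1\<close>] \<open>0 \<le> t\<close>]
  have den: "0 < \<delta> - \<beta> * z - (1 - z) * \<beta> * exp ((\<beta> - \<delta>) * t)"
    using id(1) birth_less_death by linarith
  from exp_decay_le_one[OF \<open>0 \<le> t\<close>] have "0 \<le> (1 - z) * (\<delta> - \<beta> * z) * (1 - exp ((\<beta> - \<delta>) * t))"
    using assms death_minus_birth_pos[of z] by simp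
  then have "0 \<le> flow z t - z" unfolding id(4) using den by simp
  then show "z \<le> flow z t" by simp
  have "0 < (1 - z) * (\<delta> - \<beta>) * exp ((\<beta> - \<delta>) * t)"
    using assms birth_less_death by simp
  then have "0 < 1 - flow z t" unfolding id(2) using den by simp
  then show "flow z t < 1" by simp
  have "0 < (\<delta> - \<beta>) * (\<delta> - \<beta> * z)"
    using assms birth_less_death death_minus_birth_pos[of z] by simp
  then show "0 < \<delta> - \<beta> * flow z t" unfolding id(3) using den by simp
qed

lemma flow_zero: "z \<le> 1 \<Longrightarrow> flow z 0 = z"
  using flow_identities(4)[of z 0] by simp

lemma one_minus_flow_le:
  assumes "z \<le> 1" "0 \<le> t"
  shows "1 - flow z t \<le> (1 - z) * exp ((\<beta> - \<delta>) * t)"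
proof -
  note id = flow_identities[OF assms]
  let ?den = "\<delta> - \<beta> * z - (1 - z) * \<beta> * exp ((\<beta> - \<delta>) * t)"
  have "(\<delta> - \<beta>) / ?den \<le> 1" using id(1) birth_less_death by simp
  then have "(1 - z) * exp ((\<beta> - \<delta>) * t) * ((\<delta> - \<beta>) / ?den) \<le> (1 - z) * exp ((\<beta> - \<delta>) * t)"
    using assms by (intro mult_left_le) auto
  then show ?thesis unfolding id(2) by (simp add: algebra_simps)
qed

lemma flow_has_derivative:
  assumes "z \<le> 1" "0 \<le> t"
  shows "(flow z has_real_derivative (1 - flow z t) * (\<delta> - \<beta> * flow z t)) (at t)"
proof -
  note id = flow_identities[OF assms]
  let ?a = "exp ((\<beta> - \<delta>) * t)"
  let ?den = "\<delta> - \<beta> * z - (1 - z) * \<beta> * ?a"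
  have den: "?den \<noteq> 0" using id(1) birth_less_death by linarith
  have "(flow z has_real_derivative
      ((1 - z) * \<delta> * ((\<delta> - \<beta>) * ?a) * ?den - (\<delta> - \<beta> * z - (1 - z) * \<delta> * ?a) * ((1 - z) * \<beta> * ((\<delta> - \<beta>) * ?a)))
      / (?den * ?den)) (at t)"
    unfolding flow_def[abs_def] using den
    by (auto intro!: derivative_eq_intros simp: algebra_simps)
  then show ?thesis
    by (rule DERIV_cong) (use den in \<open>simp add: id(2,3) field_simps\<close>)
qed

lemma flow_conserved:
  assumes "z < 1" "0 \<le> t"
  shows "(\<delta> - \<beta> * z) / (1 - z) * (1 - flow z t) / (\<delta> - \<beta> * flow z t) = exp ((\<beta> - \<delta>) * t)"
proof -
  have cancel: "(d / c) * (c * r * a / e) / (r * d / e) = a"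
    if "d \<noteq> 0" "c \<noteq> 0" "r \<noteq> 0" "e \<noteq> 0" for a c d e r :: real
    using that by (simp add: field_simps)
  note id = flow_identities[OF less_imp_le[OF \<open>z < 1\<close>] \<open>0 \<le> t\<close>]
  show ?thesis
    unfolding id(2,3)
    by (rule cancel) (use id(1) birth_less_death assms death_minus_birth_pos[of z] in auto)
qed

abbreviation s_hat :: "complex \<Rightarrow> complex" where
  "s_hat s \<equiv> s / complex_of_real (\<delta> - \<beta>)"

lemma Re_s_hat_pos: "0 < Re s \<Longrightarrow> 0 < Re (s_hat s)"
  using birth_less_death by simp

definition kernel :: "nat \<Rightarrow> complex \<Rightarrow> real \<Rightarrow> complex" where
  "kernel N0 s u = complex_of_real (1 - u) powr (s_hat s - 1)
     * complex_of_real (\<delta> - \<beta> * u) powr (- s_hat s - 1) * complex_of_real (u ^ N0)"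

lemma kernel_eq_exp:
  assumes "u < 1"
  shows "kernel N0 s u = exp ((s_hat s - 1) * of_real (ln (1 - u))
           + (- s_hat s - 1) * of_real (ln (\<delta> - \<beta> * u))) * of_real (u ^ N0)"
proof -
  have "complex_of_real (1 - u) powr (s_hat s - 1) = exp ((s_hat s - 1) * of_real (ln (1 - u)))"
    using assms by (intro powr_of_real_pos_eq_exp) simp
  moreover have "complex_of_real (\<delta> - \<beta> * u) powr (- s_hat s - 1)
      = exp ((- s_hat s - 1) * of_real (ln (\<delta> - \<beta> * u)))"
    using assms death_minus_birth_pos[of u] by (intro powr_of_real_pos_eq_exp) simp
  ultimately show ?thesis unfolding kernel_def exp_add by simp
qed

lemma continuous_on_kernel: "continuous_on {..<1} (kernel N0 s)"
proof -
  have "continuous_on {..<1} (\<lambda>u. exp ((s_hat s - 1) * of_real (ln (1 - u))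
           + (- s_hat s - 1) * of_real (ln (\<delta> - \<beta> * u))) * of_real (u ^ N0))"
  proof -
    have pos: "0 < \<delta> - \<beta> * u" if "u \<in> {..<1}" for u
      using that death_minus_birth_pos[of u] by simp
    show ?thesis by (intro continuous_intros; use pos in force)
  qed
  then show ?thesis
    by (rule continuous_on_cong[THEN iffD1, rotated 2]) (simp_all add: kernel_eq_exp)
qed

lemma norm_kernel_le:
  assumes "0 \<le> v" "v \<le> 1" "0 < Re s"
  shows "norm (kernel N0 s v) \<le> (\<delta> - \<beta>) powr (- Re (s_hat s) - 1) * (1 - v) powr (Re (s_hat s) - 1)"
proof (cases "v = 1")
  case True
  then show ?thesis by (simp add: kernel_def)
next
  case False
  let ?r = "Re (s_hat s)"
  have norm_eq: "norm (kernel N0 s v) = (1 - v) powr (?r - 1) * (\<delta> - \<beta> * v) powr (- ?r - 1) * v ^ N0"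
    using assms death_minus_birth_pos[of v]
    by (simp add: kernel_def norm_mult norm_power norm_powr_real_powr)
  have "- ?r - 1 \<le> 0" using Re_s_hat_pos[OF \<open>0 < Re s\<close>] by linarith
  then have "(\<delta> - \<beta> * v) powr (- ?r - 1) \<le> (\<delta> - \<beta>) powr (- ?r - 1)"
    by (rule powr_mono2') (use assms birth_pos birth_less_death in \<open>auto simp: mult_left_le\<close>)
  moreover have "v ^ N0 \<le> 1" using assms by (simp add: power_le_one)
  ultimately have "(\<delta> - \<beta> * v) powr (- ?r - 1) * v ^ N0 \<le> (\<delta> - \<beta>) powr (- ?r - 1)"
    using assms by (simp add: mult_le_one order_trans[OF mult_right_le_one_le])
  then show ?thesis
    unfolding norm_eq mult.assoc by (subst mult.commute) (simp add: mult_left_mono)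
qed

lemma laplace_integrand_along_flow:
  assumes "0 \<le> z" "z < 1" "0 \<le> t"
  shows "complex_of_real (gfun \<beta> \<delta> N0 z t) * exp (- s * complex_of_real t) =
     complex_of_real ((\<delta> - \<beta> * z) / (1 - z)) powr s_hat s *
       (((1 - flow z t) * (\<delta> - \<beta> * flow z t)) *\<^sub>R kernel N0 s (flow z t))"
proof -
  define A where "A = 1 - flow z t"
  define B where "B = \<delta> - \<beta> * flow z t"
  define C where "C = (\<delta> - \<beta> * z) / (1 - z)"
  note bounds = flow_bounds[OF assms]
  have A: "0 < A" and B: "0 < B" using bounds by (simp_all add: A_def B_def)
  have C: "0 < C" unfolding C_def using assms death_minus_birth_pos[of z] by simp
  have "C * A / B = exp ((\<beta> - \<delta>) * t)"
    unfolding A_def B_def C_def using assms by (intro flow_conserved) auto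
  then have "ln (C * A / B) = (\<beta> - \<delta>) * t" by simp
  moreover have "ln (C * A / B) = ln C + ln A - ln B" using A B C by (simp add: ln_div ln_mult)
  ultimately have ln_C: "ln C = (\<beta> - \<delta>) * t - ln A + ln B" by linarith
  have "complex_of_real C powr s_hat s * ((A * B) *\<^sub>R kernel N0 s (flow z t))
     = exp (s_hat s * of_real (ln C) + of_real (ln A) + of_real (ln B)
         + ((s_hat s - 1) * of_real (ln A) + (- s_hat s - 1) * of_real (ln B)))
       * of_real (flow z t ^ N0)"
  proof -
    have "kernel N0 s (flow z t) = exp ((s_hat s - 1) * of_real (ln A)
        + (- s_hat s - 1) * of_real (ln B)) * of_real (flow z t ^ N0)"
      unfolding A_def B_def by (rule kernel_eq_exp[OF bounds(2)])
    moreover have "complex_of_real (A * B) = exp (of_real (ln A)) * exp (of_real (ln B))"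
      using A B by (simp only: of_real_mult of_real_pos_eq_exp[symmetric])
    ultimately show ?thesis
      using C by (simp only: scaleR_conv_of_real powr_of_real_pos_eq_exp exp_add ac_simps)
  qed
  also have "s_hat s * of_real (ln C) + of_real (ln A) + of_real (ln B)
         + ((s_hat s - 1) * of_real (ln A) + (- s_hat s - 1) * of_real (ln B))
       = s_hat s * of_real (ln C + ln A - ln B)"
    by (simp add: algebra_simps add_divide_distrib)
  also have "ln C + ln A - ln B = (\<beta> - \<delta>) * t"
    using ln_C by simp
  also have "x * complex_of_real ((\<beta> - \<delta>) * t) = - (x * of_real (\<delta> - \<beta>)) * of_real t" for x
    by (simp add: algebra_simps)
  also have "s_hat s * of_real (\<delta> - \<beta>) = s"
    using birth_less_death by simp
  finally show ?thesis
    unfolding gfun_eq_flow_power A_def B_def C_def by (simp add: mult.commute)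
qed

lemma laplace_transform_truncated:
  assumes "0 \<le> z" "z < 1" "0 \<le> T"
  shows "((\<lambda>t. complex_of_real (gfun \<beta> \<delta> N0 z t) * exp (- s * complex_of_real t)) has_integral
     complex_of_real ((\<delta> - \<beta> * z) / (1 - z)) powr s_hat s
       * integral {z..flow z T} (kernel N0 s)) {0..T}"
proof -
  let ?u = "flow z" and ?F = "kernel N0 s"
  have deriv: "(?u has_real_derivative (1 - ?u t) * (\<delta> - \<beta> * ?u t)) (at t)" if "0 \<le> t" for t
    using assms that by (intro flow_has_derivative) auto
  have mono: "?u t \<le> ?u T" if "0 \<le> t" "t \<le> T" for t
  proof (rule DERIV_nonneg_imp_nondecreasing[OF that(2)])
    fix x assume "t \<le> x" "x \<le> T"
    with that have "0 \<le> x" by simp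
    then have "0 \<le> (1 - ?u x) * (\<delta> - \<beta> * ?u x)"
      using flow_bounds[OF assms(1,2)] by (simp add: less_imp_le)
    with deriv[OF \<open>0 \<le> x\<close>] show "\<exists>y. (?u has_real_derivative y) (at x) \<and> 0 \<le> y"
      by blast
  qed
  have image: "?u ` {0..T} \<subseteq> {z..?u T}"
    using mono flow_bounds(1)[OF assms(1,2)] by auto
  have "continuous_on {z..?u T} ?F"
    using flow_bounds(2)[OF assms] by (intro continuous_on_subset[OF continuous_on_kernel]) auto
  moreover have "continuous_on {0..T} ?u"
    using deriv by (intro continuous_at_imp_continuous_on ballI DERIV_isCont) auto
  ultimately have "((\<lambda>t. ((1 - ?u t) * (\<delta> - \<beta> * ?u t)) *\<^sub>R ?F (?u t)) has_integral
      integral {?u 0..?u T} ?F - integral {?u T..?u 0} ?F) {0..T}"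
    using image assms deriv
    by (intro has_integral_substitution_general[of "{}" 0 T ?u z "?u T"])
      (auto intro: has_field_derivative_at_within)
  moreover have "integral {?u T..?u 0} ?F = 0"
    using flow_zero[of z] flow_bounds(1)[OF assms] assms by (cases "?u T = z") auto
  ultimately have "((\<lambda>t. ((1 - ?u t) * (\<delta> - \<beta> * ?u t)) *\<^sub>R ?F (?u t)) has_integral
      integral {z..?u T} ?F) {0..T}"
    using flow_zero[of z] assms by simp
  then show ?thesis
    by (rule has_integral_eq[rotated, OF has_integral_mult_right])
      (use assms laplace_integrand_along_flow in auto)
qed

lemma kernel_integral_flow_tendsto:
  assumes "0 \<le> z" "z < 1" "0 < Re s"
  shows "kernel N0 s integrable_on {z..1}"
    and "(\<lambda>n. integral {z..flow z (real n)} (kernel N0 s)) \<longlonglongrightarrow> integral {z..1} (kernel N0 s)"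
proof -
  let ?g = "\<lambda>v. (\<delta> - \<beta>) powr (- Re (s_hat s) - 1) * (1 - v) powr (Re (s_hat s) - 1)"
  have "(\<lambda>v. (1 - v) powr (Re (s_hat s) - 1)) integrable_on {z..1}"
    using Re_s_hat_pos[OF assms(3)] assms by (intro integrable_on_one_minus_powr) auto
  from integrable_cmul[OF this, where c="(\<delta> - \<beta>) powr (- Re (s_hat s) - 1)"]
  have g_int: "?g integrable_on {z..1}" by (simp only: real_scaleR_def)
  have dom: "norm (kernel N0 s v) \<le> ?g v" if "v \<in> {z..1}" for v
    using that assms by (intro norm_kernel_le) auto
  have sub: "{z..flow z (real n)} \<subseteq> {z..1}" for n
    using flow_bounds(2)[OF assms(1,2), of "real n"] by auto
  have kernel_int: "kernel N0 s integrable_on {z..flow z (real n)}" for n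
    using flow_bounds[OF assms(1,2), of "real n"]
    by (intro integrable_continuous_interval continuous_on_subset[OF continuous_on_kernel]) auto
  have exh: "eventually (\<lambda>n. v \<in> {z..flow z (real n)}) sequentially"
    if "v \<in> {z..1}" "kernel N0 s v \<noteq> 0" for v
  proof -
    \<comment> \<open>The kernel vanishes at \<open>1\<close> because \<open>0 powr w = 0\<close>; \<open>1\<close> itself is never reached by the flow.\<close>
    from that have "v < 1" by (cases "v = 1") (auto simp: kernel_def)
    have "(\<lambda>n. exp (\<beta> - \<delta>) ^ n) \<longlonglongrightarrow> 0"
      using birth_less_death by (intro LIMSEQ_power_zero) simp
    then have "(\<lambda>n. (1 - z) * exp ((\<beta> - \<delta>) * real n)) \<longlonglongrightarrow> (1 - z) * 0"
      by (intro tendsto_mult_left) (simp add: exp_of_nat_mult[symmetric] mult.commute)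
    then have "eventually (\<lambda>n. (1 - z) * exp ((\<beta> - \<delta>) * real n) < 1 - v) sequentially"
      using \<open>v < 1\<close> by (intro order_tendstoD(2)) auto
    then show ?thesis
    proof eventually_elim
      case (elim n)
      with one_minus_flow_le[of z "real n"] assms have "v \<le> flow z (real n)" by simp
      then show ?case using that by simp
    qed
  qed
  show "kernel N0 s integrable_on {z..1}"
    by (rule dominated_exhaustion(1)[OF sub kernel_int g_int dom exh])
  show "(\<lambda>n. integral {z..flow z (real n)} (kernel N0 s)) \<longlonglongrightarrow> integral {z..1} (kernel N0 s)"
    by (rule dominated_exhaustion(2)[OF sub kernel_int g_int dom exh])
qed

lemma laplace_transform_has_integral:
  assumes "0 \<le> z" "z < 1" "0 < Re s"
  shows "((\<lambda>t. complex_of_real (gfun \<beta> \<delta> N0 z t) * exp (- s * complex_of_real t)) has_integral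
     complex_of_real ((\<delta> - \<beta> * z) / (1 - z)) powr s_hat s * integral {z..1} (kernel N0 s)) {0..}"
proof -
  let ?h = "\<lambda>t. complex_of_real (gfun \<beta> \<delta> N0 z t) * exp (- s * complex_of_real t)"
  let ?P = "complex_of_real ((\<delta> - \<beta> * z) / (1 - z)) powr s_hat s"
  have trunc: "(?h has_integral ?P * integral {z..flow z (real n)} (kernel N0 s)) {0..real n}" for n
    using assms by (intro laplace_transform_truncated) auto
  have sub: "{0..real n} \<subseteq> {0..}" for n by auto
  have h_int: "?h integrable_on {0..real n}" for n using trunc by blast
  have g_int: "(\<lambda>t. exp (- Re s * t)) integrable_on {0..}"
    using integrable_on_exp_minus_to_infinity[OF assms(3)] by simp
  have dom: "norm (?h t) \<le> exp (- Re s * t)" if "t \<in> {0..}" for t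
  proof -
    have "0 \<le> flow z t" "flow z t < 1"
      using flow_bounds[OF assms(1,2), of t] that assms by auto
    then have "\<bar>flow z t\<bar> ^ N0 \<le> 1" by (intro power_le_one) auto
    then show ?thesis by (simp add: gfun_eq_flow_power norm_mult norm_power)
  qed
  have exh: "eventually (\<lambda>n. t \<in> {0..real n}) sequentially" if "t \<in> {0..}" for t
  proof -
    have "eventually (\<lambda>n. t \<le> real n) sequentially"
      by (meson eventually_sequentiallyI nat_ceiling_le_eq)
    then show ?thesis by eventually_elim (use that in auto)
  qed
  have "(\<lambda>n. integral {0..real n} ?h) \<longlonglongrightarrow> integral {0..} ?h"
    by (rule dominated_exhaustion(2)[OF sub h_int g_int dom exh])
  moreover have "(\<lambda>n. integral {0..real n} ?h) \<longlonglongrightarrow> ?P * integral {z..1} (kernel N0 s)"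
    unfolding integral_unique[OF trunc]
    by (intro tendsto_mult_left kernel_integral_flow_tendsto(2) assms)
  ultimately have "integral {0..} ?h = ?P * integral {z..1} (kernel N0 s)"
    by (rule LIMSEQ_unique)
  with dominated_exhaustion(1)[OF sub h_int g_int dom exh] show ?thesis
    using integrable_integral by metis
qed

lemma Gfun_eq_prefactor_tail:
  assumes "0 \<le> w" "w < 1" "0 < Re s"
  shows "Gfun \<beta> \<delta> N0 w s
    = complex_of_real ((\<delta> - \<beta> * w) / (1 - w)) powr s_hat s * integral {w..1} (kernel N0 s)"
  unfolding Gfun_def using laplace_transform_has_integral[OF assms] by (rule integral_unique)

lemma prefactor_has_vector_derivative:
  assumes "z < 1"
  shows "((\<lambda>w. complex_of_real ((\<delta> - \<beta> * w) / (1 - w)) powr s_hat s) has_vector_derivative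
     of_real ((\<delta> - \<beta>) / ((1 - z) * (\<delta> - \<beta> * z))) * s_hat s
       * complex_of_real ((\<delta> - \<beta> * z) / (1 - z)) powr s_hat s) (at z within {..<1})"
proof -
  define r where "r w = (\<delta> - \<beta> * w) / (1 - w)" for w
  have r_pos: "0 < r w" if "w < 1" for w
    using that death_minus_birth_pos[of w] by (simp add: r_def)
  have "(r has_real_derivative (\<delta> - \<beta>) / (1 - z)\<^sup>2) (at z)"
    unfolding r_def[abs_def] using assms
    by (auto intro!: derivative_eq_intros simp: field_simps power2_eq_square)
  then have "((\<lambda>w. ln (r w)) has_real_derivative 1 / r z * ((\<delta> - \<beta>) / (1 - z)\<^sup>2)) (at z)"
    using r_pos[OF assms] by (intro DERIV_ln_divide[THEN DERIV_chain2]) auto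
  then have "((\<lambda>w. ln (r w)) has_real_derivative (\<delta> - \<beta>) / ((1 - z) * (\<delta> - \<beta> * z))) (at z)"
  proof (rule DERIV_cong)
    have "1 / (d / c) * (e / c\<^sup>2) = e / (c * d)" if "c \<noteq> 0" "d \<noteq> 0" for c d e :: real
      using that by (simp add: field_simps power2_eq_square)
    then show "1 / r z * ((\<delta> - \<beta>) / (1 - z)\<^sup>2) = (\<delta> - \<beta>) / ((1 - z) * (\<delta> - \<beta> * z))"
      unfolding r_def using assms death_minus_birth_pos[of z] by simp
  qed
  then have d_ln: "((\<lambda>w. complex_of_real (ln (r w))) has_vector_derivative
      of_real ((\<delta> - \<beta>) / ((1 - z) * (\<delta> - \<beta> * z)))) (at z within {..<1})"
    by (rule has_vector_derivative_of_real[OF has_field_derivative_at_within])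
  have d_exp: "((\<lambda>x. exp (s_hat s * x)) has_field_derivative s_hat s * exp (s_hat s * of_real (ln (r z))))
      (at (of_real (ln (r z))))"
    using birth_less_death by (auto intro!: derivative_eq_intros)
  from field_vector_diff_chain_within[OF d_ln has_field_derivative_at_within[OF d_exp]]
  have d: "((\<lambda>w. exp (s_hat s * of_real (ln (r w)))) has_vector_derivative
      of_real ((\<delta> - \<beta>) / ((1 - z) * (\<delta> - \<beta> * z))) * (s_hat s * exp (s_hat s * of_real (ln (r z)))))
      (at z within {..<1})"
    unfolding o_def .
  have eq: "complex_of_real (r w) powr s_hat s = exp (s_hat s * of_real (ln (r w)))"
    if "w \<in> {..<1}" for w
    using r_pos that by (simp add: powr_of_real_pos_eq_exp)
  have "z \<in> {..<1}" using assms by simp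
  from has_vector_derivative_transform[OF this eq d[folded eq[OF this]]]
  show ?thesis unfolding r_def mult.assoc .
qed

lemma prefactor_mult_kernel:
  assumes "z < 1"
  shows "complex_of_real ((1 - z) * (\<delta> - \<beta> * z))
      * (complex_of_real ((\<delta> - \<beta> * z) / (1 - z)) powr s_hat s * kernel N0 s z) = of_real (z ^ N0)"
proof -
  let ?a = "ln (1 - z)" and ?b = "ln (\<delta> - \<beta> * z)"
  have pos: "0 < 1 - z" "0 < \<delta> - \<beta> * z" using assms death_minus_birth_pos[of z] by auto
  have "complex_of_real ((1 - z) * (\<delta> - \<beta> * z)) = exp (of_real ?a) * exp (of_real ?b)"
    using pos by (simp only: of_real_mult of_real_pos_eq_exp[symmetric])
  moreover have "complex_of_real ((\<delta> - \<beta> * z) / (1 - z)) powr s_hat s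
      = exp (s_hat s * of_real (ln ((\<delta> - \<beta> * z) / (1 - z))))"
    using pos by (intro powr_of_real_pos_eq_exp) simp
  moreover have "ln ((\<delta> - \<beta> * z) / (1 - z)) = ?b - ?a" using pos by (simp add: ln_div)
  ultimately have "complex_of_real ((1 - z) * (\<delta> - \<beta> * z))
      * (complex_of_real ((\<delta> - \<beta> * z) / (1 - z)) powr s_hat s * kernel N0 s z)
    = exp (of_real ?a + of_real ?b + s_hat s * of_real (?b - ?a)
        + ((s_hat s - 1) * of_real ?a + (- s_hat s - 1) * of_real ?b)) * of_real (z ^ N0)"
    using assms by (simp only: kernel_eq_exp exp_add mult.assoc)
  also have "of_real ?a + of_real ?b + s_hat s * of_real (?b - ?a)
        + ((s_hat s - 1) * of_real ?a + (- s_hat s - 1) * of_real ?b) = (0 :: complex)"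
    by (simp add: algebra_simps)
  finally show ?thesis by simp
qed

lemma Gfun_ode:
  assumes "0 \<le> z" "z < 1" "0 < Re s"
  shows "\<exists>G'. ((\<lambda>w. Gfun \<beta> \<delta> N0 w s) has_vector_derivative G') (at z within {0..<1})
           \<and> complex_of_real ((1 - z) * (\<delta> - \<beta> * z)) * G' = s * Gfun \<beta> \<delta> N0 z s - of_real (z ^ N0)"
proof -
  let ?P = "\<lambda>w. complex_of_real ((\<delta> - \<beta> * w) / (1 - w)) powr s_hat s"
  let ?Q = "\<lambda>w. integral {w..1} (kernel N0 s)"
  let ?L = "complex_of_real ((\<delta> - \<beta>) / ((1 - z) * (\<delta> - \<beta> * z)))"
  let ?X = "complex_of_real ((1 - z) * (\<delta> - \<beta> * z))"
  have z: "z \<in> {0..<1}" using assms by simp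
  have dP: "(?P has_vector_derivative ?L * s_hat s * ?P z) (at z within {0..<1})"
    by (rule has_vector_derivative_within_subset[OF prefactor_has_vector_derivative[OF assms(2)]]) auto
  have "continuous (at z) (kernel N0 s)"
    using continuous_on_kernel assms by (simp add: continuous_on_eq_continuous_at)
  then have dQ: "(?Q has_vector_derivative - kernel N0 s z) (at z within {0..<1})"
    using kernel_integral_flow_tendsto(1)[of 0 s N0] assms z
    by (intro integral_tail_has_vector_derivative[OF _ z continuous_at_imp_continuous_at_within]) auto
  have "((\<lambda>w. ?P w * ?Q w) has_vector_derivative ?P z * - kernel N0 s z + ?L * s_hat s * ?P z * ?Q z)
      (at z within {0..<1})"
    by (rule has_vector_derivative_mult[OF dP dQ])
  then have dG: "((\<lambda>w. Gfun \<beta> \<delta> N0 w s) has_vector_derivative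
      ?P z * - kernel N0 s z + ?L * s_hat s * ?P z * ?Q z) (at z within {0..<1})"
    by (rule has_vector_derivative_transform[OF z, rotated]) (use assms Gfun_eq_prefactor_tail in auto)
  have "(1 - z) * (\<delta> - \<beta> * z) * ((\<delta> - \<beta>) / ((1 - z) * (\<delta> - \<beta> * z))) = \<delta> - \<beta>"
    using assms death_minus_birth_pos[of z] by simp
  then have "?X * ?L = of_real (\<delta> - \<beta>)" by (simp only: of_real_mult[symmetric])
  then have X_L: "?X * ?L * s_hat s = s" using birth_less_death by simp
  have regroup: "X * (P * - K + L * c * P * Q) = (X * L * c) * (P * Q) - X * (P * K)"
    for X L c P K Q :: complex
    by (simp add: algebra_simps)
  have "?X * (?P z * - kernel N0 s z + ?L * s_hat s * ?P z * ?Q z)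
      = s * (?P z * ?Q z) - ?X * (?P z * kernel N0 s z)"
    by (simp only: regroup X_L)
  also have "\<dots> = s * Gfun \<beta> \<delta> N0 z s - of_real (z ^ N0)"
    unfolding Gfun_eq_prefactor_tail[OF assms] prefactor_mult_kernel[OF assms(2)] ..
  finally show ?thesis using dG by blast
qed

end

theorem mainTheorem6:
  fixes \<beta> \<delta> :: real and N0 :: nat and s :: complex
  assumes "0 < \<beta>" and "\<beta> < \<delta>" and "Re s > 0"
  defines "sh \<equiv> s / complex_of_real (\<delta> - \<beta>)"
  shows "\<forall>z. 0 \<le> z \<and> z < 1 \<longrightarrow>
           (\<lambda>u. complex_of_real (1 - u) powr (sh - 1) * complex_of_real (\<delta> - \<beta> * u) powr (- sh - 1)
                 * complex_of_real (u ^ N0)) integrable_on {z..1}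
         \<and> ((\<lambda>t. complex_of_real (gfun \<beta> \<delta> N0 z t) * exp (- s * complex_of_real t)) has_integral
             (complex_of_real ((\<delta> - \<beta> * z) / (1 - z)) powr sh *
              integral {z..1} (\<lambda>u. complex_of_real (1 - u) powr (sh - 1)
                 * complex_of_real (\<delta> - \<beta> * u) powr (- sh - 1) * complex_of_real (u ^ N0)))) {0..}
         \<and> (\<exists>G'. ((\<lambda>w. Gfun \<beta> \<delta> N0 w s) has_vector_derivative G') (at z within {0..<1})
                 \<and> complex_of_real ((1 - z) * (\<delta> - \<beta> * z)) * G'
                     = s * Gfun \<beta> \<delta> N0 z s - complex_of_real (z ^ N0))"
proof -
  interpret birth_death \<beta> \<delta> using assms(1,2) by unfold_locales
  have kernel: "(\<lambda>u. complex_of_real (1 - u) powr (sh - 1) * complex_of_real (\<delta> - \<beta> * u) powr (- sh - 1)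
      * complex_of_real (u ^ N0)) = kernel N0 s"
    by (simp add: fun_eq_iff kernel_def sh_def)
  show ?thesis
    unfolding kernel unfolding sh_def
    using kernel_integral_flow_tendsto(1) laplace_transform_has_integral Gfun_ode assms(3)
    by blast
qed

end
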